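(* If $K\subset L^1$ is uniformly integrable, then its closed convex hull in $L^1$ is also uniformly integrable.
   Context: $(\Omega,\mathcal F)$ is a measurable space, $\mathcal H$ a linear space of $\mathcal F$-measurable real functions containing the constants, closed under $X\mapsto|X|$ and $X\mapsto I_AX$ ($A\in\mathcal F$), and $\mathcal E:\mathcal H\to\mathbb R$ is a sublinear expectation (monotone, constant preserving, subadditive, positively homogeneous) with the monotone continuity property ($X_i\downarrow 0$ pointwise implies $\mathcal E(X_i)\to0$). $\|X\|_1:=\mathcal E(|X|)$ and $L^1$ is the completion of $\{X\in\mathcal H:\|X\|_1<\infty\}$ under this seminorm modulo null elements. A set $K\subset L^1$ is uniformly integrable if $\sup_{X\in K}\mathcal E(I_{\{|X|\ge c\}}|X|)\to0$ as $c\to\infty$. *)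

theory Defs
  imports "HOL-Analysis.Analysis"
begin

definition sublinear_expectation_space ::
  "'a measure \<Rightarrow> ('a \<Rightarrow> real) set \<Rightarrow> (('a \<Rightarrow> real) \<Rightarrow> real) \<Rightarrow> bool" where
  "sublinear_expectation_space M H E \<longleftrightarrow>
     H \<subseteq> borel_measurable M
   \<and> (\<forall>c. (\<lambda>_. c) \<in> H)
   \<and> (\<forall>X\<in>H. \<forall>Y\<in>H. (\<lambda>w. X w + Y w) \<in> H)
   \<and> (\<forall>X\<in>H. \<forall>c. (\<lambda>w. c * X w) \<in> H)
   \<and> (\<forall>X\<in>H. (\<lambda>w. \<bar>X w\<bar>) \<in> H)
   \<and> (\<forall>X\<in>H. \<forall>A\<in>sets M. (\<lambda>w. indicator A w * X w) \<in> H)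
   \<and> (\<forall>X\<in>H. \<forall>Y\<in>H. (\<forall>w\<in>space M. X w \<le> Y w) \<longrightarrow> E X \<le> E Y)
   \<and> (\<forall>c. E (\<lambda>_. c) = c)
   \<and> (\<forall>X\<in>H. \<forall>Y\<in>H. E (\<lambda>w. X w + Y w) \<le> E X + E Y)
   \<and> (\<forall>X\<in>H. \<forall>c\<ge>0. E (\<lambda>w. c * X w) = c * E X)
   \<and> (\<forall>Xs. (\<forall>i. Xs i \<in> H) \<longrightarrow>
          (\<forall>w\<in>space M. decseq (\<lambda>i. Xs i w) \<and> (\<lambda>i. Xs i w) \<longlonglongrightarrow> 0) \<longrightarrow>
          (\<lambda>i. E (Xs i)) \<longlonglongrightarrow> 0)"

text \<open>Canonical extension of E to nonnegative measurable functions (the value the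
 continuous extension of E to the completion L^1 takes on nonnegative elements).\<close>
definition ext_E ::
  "'a measure \<Rightarrow> ('a \<Rightarrow> real) set \<Rightarrow> (('a \<Rightarrow> real) \<Rightarrow> real) \<Rightarrow> ('a \<Rightarrow> real) \<Rightarrow> ereal" where
  "ext_E M H E Y = (SUP Z \<in> {Z \<in> H. \<forall>w\<in>space M. 0 \<le> Z w \<and> Z w \<le> Y w}. ereal (E Z))"

text \<open>L^1: measurable functions that are L^1-limits of elements of H
 (representatives of the completion; null elements are not quotiented out).\<close>
definition L1 ::
  "'a measure \<Rightarrow> ('a \<Rightarrow> real) set \<Rightarrow> (('a \<Rightarrow> real) \<Rightarrow> real) \<Rightarrow> ('a \<Rightarrow> real) set" where
  "L1 M H E = {X \<in> borel_measurable M. \<exists>Xs. (\<forall>n. Xs n \<in> H) \<and>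
       (\<lambda>n. ext_E M H E (\<lambda>w. \<bar>X w - Xs n w\<bar>)) \<longlonglongrightarrow> 0}"

definition convex_hull_fun :: "('a \<Rightarrow> real) set \<Rightarrow> ('a \<Rightarrow> real) set" where
  "convex_hull_fun K = {Y. \<exists>(n::nat) a Xs. n > 0 \<and> (\<forall>i<n. 0 \<le> a i \<and> Xs i \<in> K) \<and>
       (\<Sum>i<n. a i) = (1::real) \<and> Y = (\<lambda>w. \<Sum>i<n. a i * Xs i w)}"

definition L1_closure ::
  "'a measure \<Rightarrow> ('a \<Rightarrow> real) set \<Rightarrow> (('a \<Rightarrow> real) \<Rightarrow> real) \<Rightarrow> ('a \<Rightarrow> real) set \<Rightarrow> ('a \<Rightarrow> real) set" where
  "L1_closure M H E S = {X \<in> L1 M H E. \<forall>e>0. \<exists>Y\<in>S.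
       ext_E M H E (\<lambda>w. \<bar>X w - Y w\<bar>) < ereal e}"

definition closed_convex_hull_L1 ::
  "'a measure \<Rightarrow> ('a \<Rightarrow> real) set \<Rightarrow> (('a \<Rightarrow> real) \<Rightarrow> real) \<Rightarrow> ('a \<Rightarrow> real) set \<Rightarrow> ('a \<Rightarrow> real) set" where
  "closed_convex_hull_L1 M H E K = L1_closure M H E (convex_hull_fun K)"

definition uniformly_integrable ::
  "'a measure \<Rightarrow> ('a \<Rightarrow> real) set \<Rightarrow> (('a \<Rightarrow> real) \<Rightarrow> real) \<Rightarrow> ('a \<Rightarrow> real) set \<Rightarrow> bool" where
  "uniformly_integrable M H E K \<longleftrightarrow> K \<subseteq> L1 M H E \<and>
     (\<forall>e>0. \<exists>c0. \<forall>c\<ge>c0. \<forall>X\<in>K.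
        ext_E M H E (\<lambda>w. indicator {w. \<bar>X w\<bar> \<ge> c} w * \<bar>X w\<bar>) \<le> ereal e)"

end

theory Submission
  imports Defs
begin

text \<open>Write T_c(Z) = I{|Z| \<ge> c} |Z| for the tail of Z above level c. For a convex combination
  Y = \<Sum> a_i X_i one has |Y| \<le> d + \<Sum> a_i T_d(X_i), which together with the triangle inequality
  gives the pointwise bound T_2d(X) \<le> 2 |X - Y| + 2 \<Sum> a_i T_d(X_i) for every X. The extension of
  E to nonnegative measurable functions is monotone, positively homogeneous and subadditive;
  subadditivity rests on approximating from below by elements of H and on the monotone
  continuity of E. Applying the extension to the pointwise bound, with Y chosen L^1-close to X,
  bounds the tails of the closed convex hull at level 2d by twice the tails of K at level d.\<close>

lemma convex_combination_tail_bound: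
  fixes x d :: real and a y :: "'i \<Rightarrow> real"
  assumes "finite I" "\<And>i. i \<in> I \<Longrightarrow> 0 \<le> a i" "sum a I = 1" "0 < d"
  shows "indicator {t. 2 * d \<le> \<bar>t\<bar>} x * \<bar>x\<bar>
    \<le> 2 * \<bar>x - (\<Sum>i\<in>I. a i * y i)\<bar> + 2 * (\<Sum>i\<in>I. a i * (indicator {t. d \<le> \<bar>t\<bar>} (y i) * \<bar>y i\<bar>))"
    (is "_ \<le> 2 * \<bar>x - ?y\<bar> + 2 * ?S")
proof -
  have "\<bar>?y\<bar> \<le> (\<Sum>i\<in>I. \<bar>a i * y i\<bar>)"
    by (rule sum_abs)
  also have "\<dots> \<le> (\<Sum>i\<in>I. a i * (d + indicator {t. d \<le> \<bar>t\<bar>} (y i) * \<bar>y i\<bar>))"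
    using assms by (intro sum_mono) (auto simp: abs_mult intro!: mult_left_mono split: split_indicator)
  also have "\<dots> = d + ?S"
    using assms(3) by (simp add: distrib_left sum.distrib sum_distrib_right[symmetric])
  finally have "\<bar>?y\<bar> \<le> d + ?S" .
  moreover have "0 \<le> ?S"
    using assms(2) by (intro sum_nonneg) simp
  moreover have "\<bar>x\<bar> - \<bar>?y\<bar> \<le> \<bar>x - ?y\<bar>"
    by (rule abs_triangle_ineq2)
  \<comment> \<open>If 2d \<le> |x| then 2|?y| \<le> |x| + 2 ?S, which the triangle inequality turns into the claim.\<close>
  ultimately show ?thesis
    by (auto split: split_indicator)
qed

lemma ext_E_mono:
  assumes "\<And>w. w \<in> space M \<Longrightarrow> Y1 w \<le> Y2 w"
  shows "ext_E M H E Y1 \<le> ext_E M H E Y2"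
  unfolding ext_E_def using assms by (intro SUP_subset_mono) (auto intro: order_trans)

lemma ext_E_upper:
  assumes "Z \<in> H" "\<And>w. w \<in> space M \<Longrightarrow> 0 \<le> Z w \<and> Z w \<le> Y w"
  shows "ereal (E Z) \<le> ext_E M H E Y"
  unfolding ext_E_def by (rule SUP_upper) (simp add: assms)

lemma convex_hull_funE:
  assumes "Y \<in> convex_hull_fun K"
  obtains n :: nat and a :: "nat \<Rightarrow> real" and Xs
  where "\<And>i. i < n \<Longrightarrow> 0 \<le> a i" "(\<Sum>i<n. a i) = 1" "\<And>i. i < n \<Longrightarrow> Xs i \<in> K"
    and "Y = (\<lambda>w. \<Sum>i<n. a i * Xs i w)"
  using assms unfolding convex_hull_fun_def mem_Collect_eq
proof (elim exE conjE)
  fix n :: nat and a :: "nat \<Rightarrow> real" and Xs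
  assume "\<forall>i<n. 0 \<le> a i \<and> Xs i \<in> K" "sum a {..<n} = 1" "Y = (\<lambda>w. \<Sum>i<n. a i * Xs i w)"
  then show thesis
    by (intro that[of n a Xs]) auto
qed

lemma L1_measurable: "L1 M H E \<subseteq> borel_measurable M"
  unfolding L1_def by blast

lemma closed_convex_hull_L1_subset: "closed_convex_hull_L1 M H E K \<subseteq> L1 M H E"
  unfolding closed_convex_hull_L1_def L1_closure_def by blast

locale sublinear_expectation =
  fixes M :: "'a measure" and H :: "('a \<Rightarrow> real) set" and E :: "('a \<Rightarrow> real) \<Rightarrow> real"
  assumes const_in_H: "(\<lambda>_. c) \<in> H"
    and add_in_H: "X \<in> H \<Longrightarrow> Y \<in> H \<Longrightarrow> (\<lambda>w. X w + Y w) \<in> H"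
    and cmult_in_H: "X \<in> H \<Longrightarrow> (\<lambda>w. c * X w) \<in> H"
    and abs_in_H: "X \<in> H \<Longrightarrow> (\<lambda>w. \<bar>X w\<bar>) \<in> H"
    and indicator_mult_in_H: "X \<in> H \<Longrightarrow> A \<in> sets M \<Longrightarrow> (\<lambda>w. indicator A w * X w) \<in> H"
    and E_mono: "X \<in> H \<Longrightarrow> Y \<in> H \<Longrightarrow> (\<And>w. w \<in> space M \<Longrightarrow> X w \<le> Y w) \<Longrightarrow> E X \<le> E Y"
    and E_const: "E (\<lambda>_. c) = c"
    and E_add_le: "X \<in> H \<Longrightarrow> Y \<in> H \<Longrightarrow> E (\<lambda>w. X w + Y w) \<le> E X + E Y"
    and E_cmult: "X \<in> H \<Longrightarrow> 0 \<le> c \<Longrightarrow> E (\<lambda>w. c * X w) = c * E X"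
    and E_decseq_tendsto_zero: "(\<And>i. Xs i \<in> H) \<Longrightarrow>
      (\<And>w. w \<in> space M \<Longrightarrow> decseq (\<lambda>i. Xs i w) \<and> (\<lambda>i. Xs i w) \<longlonglongrightarrow> 0) \<Longrightarrow>
      (\<lambda>i. E (Xs i)) \<longlonglongrightarrow> 0"

lemma sublinear_expectation_spaceD:
  assumes "sublinear_expectation_space M H E"
  shows "sublinear_expectation M H E"
proof -
  have "\<forall>c. (\<lambda>_. c) \<in> H" and "\<forall>X\<in>H. \<forall>Y\<in>H. (\<lambda>w. X w + Y w) \<in> H"
    and "\<forall>X\<in>H. \<forall>c. (\<lambda>w. c * X w) \<in> H" and "\<forall>X\<in>H. (\<lambda>w. \<bar>X w\<bar>) \<in> H"
    and "\<forall>X\<in>H. \<forall>A\<in>sets M. (\<lambda>w. indicator A w * X w) \<in> H"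
    and "\<forall>X\<in>H. \<forall>Y\<in>H. (\<forall>w\<in>space M. X w \<le> Y w) \<longrightarrow> E X \<le> E Y"
    and "\<forall>c. E (\<lambda>_. c) = c" and "\<forall>X\<in>H. \<forall>Y\<in>H. E (\<lambda>w. X w + Y w) \<le> E X + E Y"
    and "\<forall>X\<in>H. \<forall>c\<ge>0. E (\<lambda>w. c * X w) = c * E X"
    and "\<forall>Xs. (\<forall>i. Xs i \<in> H) \<longrightarrow>
          (\<forall>w\<in>space M. decseq (\<lambda>i. Xs i w) \<and> (\<lambda>i. Xs i w) \<longlonglongrightarrow> 0) \<longrightarrow>
          (\<lambda>i. E (Xs i)) \<longlonglongrightarrow> 0"
    using assms unfolding sublinear_expectation_space_def by - (elim conjE, assumption)+
  note axioms = this[rule_format]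
  show ?thesis
    by unfold_locales (rule axioms; auto)+
qed

context sublinear_expectation
begin

lemma diff_in_H: "X \<in> H \<Longrightarrow> Y \<in> H \<Longrightarrow> (\<lambda>w. X w - Y w) \<in> H"
  using add_in_H[of X "\<lambda>w. -1 * Y w"] cmult_in_H[of Y "-1"] by simp

lemma min_in_H:
  assumes "X \<in> H" "Y \<in> H"
  shows "(\<lambda>w. min (X w) (Y w)) \<in> H"
proof -
  have "(\<lambda>w. min (X w) (Y w)) = (\<lambda>w. X w - \<bar>X w - Y w\<bar> * (1/2) - (X w - Y w) * (1/2))"
    by (auto simp: min_def abs_if fun_eq_iff field_simps)
  then show ?thesis
    using assms by (simp only: diff_in_H cmult_in_H abs_in_H mult.commute[where b = "1/2"])
qed

lemma indicator_sum_in_H: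
  assumes "finite S" "\<And>y. y \<in> S \<Longrightarrow> A y \<in> sets M"
  shows "(\<lambda>w. \<Sum>y\<in>S. c y * indicator (A y) w) \<in> H"
  using assms
proof (induction S rule: finite_induct)
  case empty
  then show ?case using const_in_H[of 0] by simp
next
  case (insert y S)
  have "(\<lambda>w. c y * (indicator (A y) w * 1)) \<in> H"
    using insert.prems by (intro cmult_in_H indicator_mult_in_H const_in_H) simp
  then have "(\<lambda>w. c y * (indicator (A y) w * 1) + (\<Sum>y\<in>S. c y * indicator (A y) w)) \<in> H"
    using insert by (intro add_in_H) simp_all
  then show ?case
    by (simp only: sum.insert[OF insert.hyps] mult_1_right)
qed

lemma simple_function_in_H:
  assumes "simple_function M g" "\<And>w. 0 \<le> g w"
  shows "\<exists>u\<in>H. \<forall>w\<in>space M. u w = g w"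
proof
  show "(\<lambda>w. \<Sum>y\<in>g ` space M. y * indicator (g -` {y} \<inter> space M) w) \<in> H"
    using assms(1) by (intro indicator_sum_in_H) (auto simp: simple_functionD)
  show "\<forall>w\<in>space M. (\<Sum>y\<in>g ` space M. y * indicator (g -` {y} \<inter> space M) w) = g w"
    by (intro ballI simple_function_indicator_representation_real[OF assms(1) _ assms(2), symmetric])
qed

lemma incseq_approximation_in_H:
  assumes "Y \<in> borel_measurable M" "\<And>w. w \<in> space M \<Longrightarrow> 0 \<le> Y w"
  obtains u where "\<And>n. u n \<in> H"
    and "\<And>n w. w \<in> space M \<Longrightarrow> 0 \<le> u n w \<and> u n w \<le> Y w"
    and "\<And>w. w \<in> space M \<Longrightarrow> incseq (\<lambda>n. u n w)"
    and "\<And>w. w \<in> space M \<Longrightarrow> (\<lambda>n. u n w) \<longlonglongrightarrow> Y w"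
proof -
  obtain F where F: "\<And>i. simple_function M (F i)" "incseq F" "\<And>i x. F i x < top"
    "\<And>x. (SUP i. F i x) = ennreal (Y x)"
    using borel_measurable_implies_simple_function_sequence'[of "\<lambda>w. ennreal (Y w)" M] assms(1)
    by auto
  define g where "g i x = enn2real (F i x)" for i x
  have "simple_function M (g i)" for i
    unfolding g_def by (rule simple_function_compose1[OF F(1)])
  then have "\<exists>u\<in>H. \<forall>w\<in>space M. u w = g i w" for i
    by (rule simple_function_in_H) (simp add: g_def)
  then obtain u where u: "\<And>i. u i \<in> H" "\<And>i w. w \<in> space M \<Longrightarrow> u i w = g i w"
    by metis
  have F_mono: "incseq (\<lambda>i. F i x)" for x
    using F(2) by (simp add: incseq_def le_fun_def)
  have F_lim: "(\<lambda>i. F i x) \<longlonglongrightarrow> ennreal (Y x)" for x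
    using LIMSEQ_SUP[OF F_mono] by (simp only: F(4))
  show thesis
  proof (rule that[OF u(1)])
    fix n w assume w: "w \<in> space M"
    have "F n w \<le> ennreal (Y w)"
      using incseq_le[OF F_mono F_lim] .
    then show "0 \<le> u n w \<and> u n w \<le> Y w"
      using assms(2)[OF w] by (simp add: u(2)[OF w] g_def enn2real_leI)
    show "incseq (\<lambda>n. u n w)"
      using F_mono[of w] F(3) by (simp add: u(2)[OF w] g_def incseq_def enn2real_mono)
    show "(\<lambda>n. u n w) \<longlonglongrightarrow> Y w"
      using tendsto_enn2real[OF F_lim assms(2)[OF w]] by (simp add: u(2)[OF w] g_def)
  qed
qed

lemma E_incseq_tendsto:
  assumes W: "\<And>n. W n \<in> H" and Z: "Z \<in> H"
    and mono: "\<And>w. w \<in> space M \<Longrightarrow> incseq (\<lambda>n. W n w)"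
    and lim: "\<And>w. w \<in> space M \<Longrightarrow> (\<lambda>n. W n w) \<longlonglongrightarrow> Z w"
  shows "(\<lambda>n. E (W n)) \<longlonglongrightarrow> E Z"
proof (rule tendsto_sandwich)
  define D where "D n = (\<lambda>w. Z w - W n w)" for n
  have D: "D n \<in> H" for n
    unfolding D_def by (intro diff_in_H W Z)
  have "(\<lambda>n. E (D n)) \<longlonglongrightarrow> 0"
  proof (rule E_decseq_tendsto_zero[OF D])
    fix w assume w: "w \<in> space M"
    show "decseq (\<lambda>n. D n w) \<and> (\<lambda>n. D n w) \<longlonglongrightarrow> 0"
      using mono[OF w] tendsto_diff[OF tendsto_const lim[OF w], of "Z w"]
      by (auto simp: D_def incseq_def decseq_def)
  qed
  then show "(\<lambda>n. E Z - E (D n)) \<longlonglongrightarrow> E Z"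
    using tendsto_diff[OF tendsto_const, of _ 0 sequentially "E Z"] by simp
  have "E Z \<le> E (W n) + E (D n)" for n
    using E_add_le[OF W D, of n n] by (simp add: D_def)
  then show "\<forall>\<^sub>F n in sequentially. E Z - E (D n) \<le> E (W n)"
    by (simp add: algebra_simps)
  show "\<forall>\<^sub>F n in sequentially. E (W n) \<le> E Z"
    using E_mono[OF W Z] incseq_le[OF mono lim] by simp
qed simp

lemma ext_E_nonpos:
  assumes "\<And>w. w \<in> space M \<Longrightarrow> Y w \<le> 0"
  shows "ext_E M H E Y \<le> 0"
  unfolding ext_E_def
proof (rule SUP_least)
  fix Z assume "Z \<in> {Z \<in> H. \<forall>w\<in>space M. 0 \<le> Z w \<and> Z w \<le> Y w}"
  then have "E Z \<le> E (\<lambda>_. 0)"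
    using assms by (intro E_mono const_in_H) force+
  then show "ereal (E Z) \<le> 0"
    by (simp add: E_const zero_ereal_def)
qed

lemma ext_E_cmult_le:
  assumes "0 \<le> a" "\<And>w. w \<in> space M \<Longrightarrow> 0 \<le> Y w"
  shows "ext_E M H E (\<lambda>w. a * Y w) \<le> ereal a * ext_E M H E Y"
proof (cases "a = 0")
  case True
  then show ?thesis
    using ext_E_nonpos[of "\<lambda>w. a * Y w"] by (simp add: zero_ereal_def[symmetric])
next
  case False
  with assms(1) have a: "0 < a" by simp
  show ?thesis
    unfolding ext_E_def[of M H E "\<lambda>w. a * Y w"]
  proof (rule SUP_least)
    fix Z assume "Z \<in> {Z \<in> H. \<forall>w\<in>space M. 0 \<le> Z w \<and> Z w \<le> a * Y w}"
    then have Z: "Z \<in> H" "\<And>w. w \<in> space M \<Longrightarrow> 0 \<le> Z w \<and> Z w \<le> a * Y w"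
      by auto
    have Z': "(\<lambda>w. inverse a * Z w) \<in> H"
      using Z(1) by (rule cmult_in_H)
    have "(\<lambda>w. a * (inverse a * Z w)) = Z"
      using a by (simp add: fun_eq_iff)
    then have "E Z = a * E (\<lambda>w. inverse a * Z w)"
      using E_cmult[OF Z' assms(1)] by simp
    also have "ereal \<dots> \<le> ereal a * ext_E M H E Y"
      using Z(2) a
      by (simp only: times_ereal.simps(1)[symmetric], intro ereal_mult_left_mono ext_E_upper[OF Z'])
        (auto simp: field_simps)
    finally show "ereal (E Z) \<le> ereal a * ext_E M H E Y" .
  qed
qed

lemma E_le_ext_E_add:
  assumes Z: "Z \<in> H" "\<And>w. w \<in> space M \<Longrightarrow> 0 \<le> Z w \<and> Z w \<le> Y1 w + Y2 w"
    and Y1: "Y1 \<in> borel_measurable M" "\<And>w. w \<in> space M \<Longrightarrow> 0 \<le> Y1 w"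
    and Y2: "Y2 \<in> borel_measurable M" "\<And>w. w \<in> space M \<Longrightarrow> 0 \<le> Y2 w"
  shows "ereal (E Z) \<le> ext_E M H E Y1 + ext_E M H E Y2"
proof -
  obtain u where u: "\<And>n. u n \<in> H" "\<And>n w. w \<in> space M \<Longrightarrow> 0 \<le> u n w \<and> u n w \<le> Y1 w"
    "\<And>w. w \<in> space M \<Longrightarrow> incseq (\<lambda>n. u n w)" "\<And>w. w \<in> space M \<Longrightarrow> (\<lambda>n. u n w) \<longlonglongrightarrow> Y1 w"
    using incseq_approximation_in_H[OF Y1] by blast
  obtain v where v: "\<And>n. v n \<in> H" "\<And>n w. w \<in> space M \<Longrightarrow> 0 \<le> v n w \<and> v n w \<le> Y2 w"
    "\<And>w. w \<in> space M \<Longrightarrow> incseq (\<lambda>n. v n w)" "\<And>w. w \<in> space M \<Longrightarrow> (\<lambda>n. v n w) \<longlonglongrightarrow> Y2 w"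
    using incseq_approximation_in_H[OF Y2] by blast
  \<comment> \<open>W n increases to Z and splits as a n + b n with a n \<le> u n \<le> Y1 and b n \<le> v n \<le> Y2.\<close>
  define W where "W n = (\<lambda>w. min (Z w) (u n w + v n w))" for n
  define a where "a n = (\<lambda>w. min (W n w) (u n w))" for n
  define b where "b n = (\<lambda>w. W n w - a n w)" for n
  have W_H: "W n \<in> H" and a_H: "a n \<in> H" and b_H: "b n \<in> H" for n
    unfolding b_def a_def W_def by (intro diff_in_H min_in_H add_in_H Z u v)+
  have a_b_bounds: "0 \<le> a n w \<and> a n w \<le> Y1 w" "0 \<le> b n w \<and> b n w \<le> Y2 w"
    if "w \<in> space M" for n w
    using Z(2)[OF that] u(2)[OF that, of n] v(2)[OF that, of n]
    unfolding b_def a_def W_def by linarith+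
  have bound: "ereal (E (W n)) \<le> ext_E M H E Y1 + ext_E M H E Y2" for n
  proof -
    have "E (W n) \<le> E (a n) + E (b n)"
      using E_add_le[OF a_H b_H, of n n] by (simp add: b_def)
    then have "ereal (E (W n)) \<le> ereal (E (a n)) + ereal (E (b n))"
      by simp
    also have "\<dots> \<le> ext_E M H E Y1 + ext_E M H E Y2"
      using a_b_bounds by (intro add_mono ext_E_upper a_H b_H) auto
    finally show ?thesis .
  qed
  have "(\<lambda>n. E (W n)) \<longlonglongrightarrow> E Z"
  proof (rule E_incseq_tendsto[OF W_H Z(1)])
    fix w assume w: "w \<in> space M"
    show "incseq (\<lambda>n. W n w)"
      using incseqD[OF u(3)[OF w]] incseqD[OF v(3)[OF w]]
      unfolding W_def by (intro incseq_SucI min.mono add_mono order_refl) auto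
    have "(\<lambda>n. W n w) \<longlonglongrightarrow> min (Z w) (Y1 w + Y2 w)"
      unfolding W_def by (intro tendsto_intros u(4)[OF w] v(4)[OF w])
    then show "(\<lambda>n. W n w) \<longlonglongrightarrow> Z w"
      using Z(2)[OF w] by simp
  qed
  then have "(\<lambda>n. ereal (E (W n))) \<longlonglongrightarrow> ereal (E Z)"
    by (rule tendsto_ereal)
  then show ?thesis
    by (rule LIMSEQ_le_const2) (use bound in auto)
qed

lemma ext_E_add_le:
  assumes "Y1 \<in> borel_measurable M" "\<And>w. w \<in> space M \<Longrightarrow> 0 \<le> Y1 w"
    and "Y2 \<in> borel_measurable M" "\<And>w. w \<in> space M \<Longrightarrow> 0 \<le> Y2 w"
  shows "ext_E M H E (\<lambda>w. Y1 w + Y2 w) \<le> ext_E M H E Y1 + ext_E M H E Y2"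
  unfolding ext_E_def[of M H E "\<lambda>w. Y1 w + Y2 w"]
  using E_le_ext_E_add[OF _ _ assms] by (intro SUP_least) auto

lemma ext_E_sum_le:
  assumes "finite I" "\<And>i. i \<in> I \<Longrightarrow> f i \<in> borel_measurable M"
    and "\<And>i w. i \<in> I \<Longrightarrow> w \<in> space M \<Longrightarrow> 0 \<le> f i w"
  shows "ext_E M H E (\<lambda>w. \<Sum>i\<in>I. f i w) \<le> (\<Sum>i\<in>I. ext_E M H E (f i))"
  using assms
proof (induction I rule: finite_induct)
  case empty
  then show ?case
    using ext_E_nonpos[of "\<lambda>w. 0"] by simp
next
  case (insert j I)
  have "ext_E M H E (\<lambda>w. \<Sum>i\<in>insert j I. f i w) = ext_E M H E (\<lambda>w. f j w + (\<Sum>i\<in>I. f i w))"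
    using insert.hyps by simp
  also have "\<dots> \<le> ext_E M H E (f j) + ext_E M H E (\<lambda>w. \<Sum>i\<in>I. f i w)"
    using insert.prems by (intro ext_E_add_le borel_measurable_sum sum_nonneg) auto
  also have "\<dots> \<le> ext_E M H E (f j) + (\<Sum>i\<in>I. ext_E M H E (f i))"
    using insert by (intro add_left_mono insert.IH) auto
  finally show ?case
    using insert.hyps by simp
qed

lemma ext_E_convex_combination_le:
  assumes "finite I" "\<And>i. i \<in> I \<Longrightarrow> 0 \<le> a i" "sum a I = 1"
    and "\<And>i. i \<in> I \<Longrightarrow> G i \<in> borel_measurable M"
    and "\<And>i w. i \<in> I \<Longrightarrow> w \<in> space M \<Longrightarrow> 0 \<le> G i w"
    and "\<And>i. i \<in> I \<Longrightarrow> ext_E M H E (G i) \<le> ereal r"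
  shows "ext_E M H E (\<lambda>w. \<Sum>i\<in>I. a i * G i w) \<le> ereal r"
proof -
  have "ext_E M H E (\<lambda>w. \<Sum>i\<in>I. a i * G i w) \<le> (\<Sum>i\<in>I. ext_E M H E (\<lambda>w. a i * G i w))"
    using assms by (intro ext_E_sum_le) auto
  also have "\<dots> \<le> (\<Sum>i\<in>I. ereal (a i) * ext_E M H E (G i))"
    using assms by (intro sum_mono ext_E_cmult_le) auto
  also have "\<dots> \<le> (\<Sum>i\<in>I. ereal (a i) * ereal r)"
    using assms by (intro sum_mono ereal_mult_left_mono) auto
  also have "\<dots> = ereal ((\<Sum>i\<in>I. a i) * r)"
    by (simp add: sum_distrib_right)
  also have "\<dots> = ereal r"
    using assms(3) by simp
  finally show ?thesis .
qed

lemma ext_E_tail_le_convex_combination: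
  assumes a: "finite I" "\<And>i. i \<in> I \<Longrightarrow> 0 \<le> a i" "sum a I = 1"
    and Xs: "\<And>i. i \<in> I \<Longrightarrow> Xs i \<in> borel_measurable M" and X: "X \<in> borel_measurable M"
    and d: "0 < d"
    and tail: "\<And>i. i \<in> I \<Longrightarrow> ext_E M H E (\<lambda>w. indicator {w. d \<le> \<bar>Xs i w\<bar>} w * \<bar>Xs i w\<bar>) \<le> ereal r"
  shows "ext_E M H E (\<lambda>w. indicator {w. 2 * d \<le> \<bar>X w\<bar>} w * \<bar>X w\<bar>)
    \<le> ereal 2 * ext_E M H E (\<lambda>w. \<bar>X w - (\<Sum>i\<in>I. a i * Xs i w)\<bar>) + ereal (2 * r)"
proof -
  define G where "G i = (\<lambda>w. indicator {w. d \<le> \<bar>Xs i w\<bar>} w * \<bar>Xs i w\<bar>)" for i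
  define Y where "Y = (\<lambda>w. \<Sum>i\<in>I. a i * Xs i w)"
  have G_measurable: "G i \<in> borel_measurable M" if "i \<in> I" for i
  proof -
    have [measurable]: "Xs i \<in> borel_measurable M"
      using Xs[OF that] .
    show ?thesis
      unfolding G_def by measurable
  qed
  have G_nonneg: "0 \<le> G i w" for i w
    by (simp add: G_def)
  have [measurable]: "X \<in> borel_measurable M" "Y \<in> borel_measurable M"
    using X Xs unfolding Y_def by auto
  have "indicator {w. 2 * d \<le> \<bar>X w\<bar>} w * \<bar>X w\<bar> \<le> 2 * \<bar>X w - Y w\<bar> + 2 * (\<Sum>i\<in>I. a i * G i w)" for w
    using convex_combination_tail_bound[of I a d "X w" "\<lambda>i. Xs i w"] a d
    by (simp add: Y_def G_def indicator_def)
  then have "ext_E M H E (\<lambda>w. indicator {w. 2 * d \<le> \<bar>X w\<bar>} w * \<bar>X w\<bar>)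
      \<le> ext_E M H E (\<lambda>w. 2 * \<bar>X w - Y w\<bar> + 2 * (\<Sum>i\<in>I. a i * G i w))"
    by (rule ext_E_mono)
  also have "\<dots> \<le> ext_E M H E (\<lambda>w. 2 * \<bar>X w - Y w\<bar>) + ext_E M H E (\<lambda>w. 2 * (\<Sum>i\<in>I. a i * G i w))"
    using a G_measurable G_nonneg by (intro ext_E_add_le) (auto intro!: sum_nonneg)
  also have "\<dots> \<le> ereal 2 * ext_E M H E (\<lambda>w. \<bar>X w - Y w\<bar>) + ereal 2 * ext_E M H E (\<lambda>w. \<Sum>i\<in>I. a i * G i w)"
    using a G_nonneg by (intro add_mono ext_E_cmult_le) (auto intro!: sum_nonneg)
  also have "ext_E M H E (\<lambda>w. \<Sum>i\<in>I. a i * G i w) \<le> ereal r"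
    using a G_measurable G_nonneg tail unfolding G_def by (intro ext_E_convex_combination_le) auto
  finally show ?thesis
    unfolding Y_def by (simp add: ereal_mult_left_mono add_left_mono)
qed

lemma ext_E_tail_le_closed_convex_hull:
  assumes K: "K \<subseteq> L1 M H E" and X: "X \<in> closed_convex_hull_L1 M H E K" and d: "0 < d"
    and tail_K: "\<And>Z. Z \<in> K \<Longrightarrow> ext_E M H E (\<lambda>w. indicator {w. d \<le> \<bar>Z w\<bar>} w * \<bar>Z w\<bar>) \<le> ereal r"
  shows "ext_E M H E (\<lambda>w. indicator {w. 2 * d \<le> \<bar>X w\<bar>} w * \<bar>X w\<bar>) \<le> ereal (2 * r)"
proof (rule ereal_le_epsilon2)
  fix e :: real assume "0 < e"
  then have "0 < e / 2"
    by simp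
  then obtain Y where Y: "Y \<in> convex_hull_fun K" "ext_E M H E (\<lambda>w. \<bar>X w - Y w\<bar>) < ereal (e / 2)"
    using X unfolding closed_convex_hull_L1_def L1_closure_def by blast
  obtain n :: nat and a Xs where a: "\<And>i. i < n \<Longrightarrow> 0 \<le> a i" "(\<Sum>i<n. a i) = 1"
    and Xs: "\<And>i. i < n \<Longrightarrow> Xs i \<in> K" and Y_eq: "Y = (\<lambda>w. \<Sum>i<n. a i * Xs i w)"
    using Y(1) by (rule convex_hull_funE) blast
  have K_measurable: "Z \<in> borel_measurable M" if "Z \<in> K" for Z
    using K L1_measurable that by blast
  have "X \<in> borel_measurable M"
    using X closed_convex_hull_L1_subset L1_measurable by blast
  then have "ext_E M H E (\<lambda>w. indicator {w. 2 * d \<le> \<bar>X w\<bar>} w * \<bar>X w\<bar>)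
      \<le> ereal 2 * ext_E M H E (\<lambda>w. \<bar>X w - Y w\<bar>) + ereal (2 * r)"
    unfolding Y_eq using a Xs K_measurable d tail_K
    by (intro ext_E_tail_le_convex_combination) auto
  also have "\<dots> \<le> ereal 2 * ereal (e / 2) + ereal (2 * r)"
    using Y(2) by (intro add_right_mono ereal_mult_left_mono) auto
  finally show "ext_E M H E (\<lambda>w. indicator {w. 2 * d \<le> \<bar>X w\<bar>} w * \<bar>X w\<bar>) \<le> ereal (2 * r) + ereal e"
    by (simp add: add.commute)
qed

end

theorem corollary2p14:
  fixes M :: "'a measure" and H :: "('a \<Rightarrow> real) set" and E :: "('a \<Rightarrow> real) \<Rightarrow> real"
    and K :: "('a \<Rightarrow> real) set"
  assumes "sublinear_expectation_space M H E"
    and "uniformly_integrable M H E K"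
  shows "uniformly_integrable M H E (closed_convex_hull_L1 M H E K)"
proof -
  interpret sublinear_expectation M H E
    using assms(1) by (rule sublinear_expectation_spaceD)
  have K: "K \<subseteq> L1 M H E"
    and tail_K: "\<And>e. 0 < e \<Longrightarrow> \<exists>c0. \<forall>c\<ge>c0. \<forall>Z\<in>K.
      ext_E M H E (\<lambda>w. indicator {w. c \<le> \<bar>Z w\<bar>} w * \<bar>Z w\<bar>) \<le> ereal e"
    using assms(2) unfolding uniformly_integrable_def by blast+
  show ?thesis
    unfolding uniformly_integrable_def
  proof (intro conjI closed_convex_hull_L1_subset allI impI)
    fix e :: real assume "0 < e"
    then obtain c1 where c1: "\<And>c Z. c1 \<le> c \<Longrightarrow> Z \<in> K \<Longrightarrow>
        ext_E M H E (\<lambda>w. indicator {w. c \<le> \<bar>Z w\<bar>} w * \<bar>Z w\<bar>) \<le> ereal (e / 2)"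
      using tail_K[of "e / 2"] by auto
    have "ext_E M H E (\<lambda>w. indicator {w. c \<le> \<bar>X w\<bar>} w * \<bar>X w\<bar>) \<le> ereal e"
      if "2 * max c1 1 \<le> c" "X \<in> closed_convex_hull_L1 M H E K" for c X
    proof -
      have "ext_E M H E (\<lambda>w. indicator {w. 2 * (c / 2) \<le> \<bar>X w\<bar>} w * \<bar>X w\<bar>) \<le> ereal (2 * (e / 2))"
        using that(1) by (intro ext_E_tail_le_closed_convex_hull[OF K that(2)] c1) auto
      then show ?thesis
        by simp
    qed
    then show "\<exists>c0. \<forall>c\<ge>c0. \<forall>X\<in>closed_convex_hull_L1 M H E K.
        ext_E M H E (\<lambda>w. indicator {w. c \<le> \<bar>X w\<bar>} w * \<bar>X w\<bar>) \<le> ereal e"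
      by blast
  qed
qed

end
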